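(* Let $r\ge 3$ and $1\le t\le r-2$ be integers. Let $\mathcal F\subseteq X_1\times\dots\times X_r$ be a non-trivial $t$-intersecting family that is $\ell$-shift-resistant for some $\ell\in[r]$. Then $|\bigcap\mathcal F|=t-1$, and there exists $x\in X_\ell\setminus\{1\}$ such that: $N_{\mathcal F}(x,\ell)\ne\emptyset$; $N_{\mathcal F}(1,\ell)\ne\emptyset$; for every $A\in N_{\mathcal F}(x,\ell)$, the sequence obtained from $A$ by replacing its $\ell$-th coordinate by $1$ does not belong to $\mathcal F$; and $N_{\mathcal F}(y,\ell)=\emptyset$ for every $y\in X_\ell\setminus\{1,x\}$.
   Context: Let $X_\ell=[n_\ell]$ for $1\le \ell\le r$, with $n_\ell\ge2$. For $A,B\in X_1\times\dots\times X_r$, write $A\cap B=\{\ell:A[\ell]=B[\ell]\}$ ($A[\ell]$ the $\ell$-th coordinate). $\mathcal F$ is $t$-intersecting if $|A\cap B|\ge t$ for all $A,B\in\mathcal F$; $\bigcap\mathcal F$ is the set of coordinates $\ell$ on which all members of $\mathcal F$ agree; a $t$-intersecting $\mathcal F$ is non-trivial if $|\bigcap\mathcal F|<t$ and trivial otherwise. For $1\le\ell\le r$ and $1<j\le n_\ell$, the shift $S^{(\ell)}_j$ acts on $F\in\mathcal F$ by: if $F[\ell]=j$ and the sequence $F'$ obtained from $F$ by replacing its $\ell$-th coordinate by $1$ is not in $\mathcal F$, then $S^{(\ell)}_j(F)=F'$; otherwise $S^{(\ell)}_j(F)=F$; and $S^{(\ell)}_j(\mathcal F)=\{S^{(\ell)}_j(F):F\in\mathcal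 F\}$. A non-trivial $t$-intersecting family $\mathcal F$ is $\ell$-shift-resistant if there exists $x\in X_\ell\setminus\{1\}$ such that $|\bigcap S^{(\ell)}_x(\mathcal F)|=t$. For $x\in X_\ell$, $N_{\mathcal F}(x,\ell)=\{A\in\mathcal F:A[\ell]=x\}$. *)

theory Defs
  imports "HOL-Library.FuncSet"
begin

text \<open>Sequences A in X_1 x ... x X_r are functions nat => nat, with coordinates
  1..r and X_l = {1..n l}; the ambient space is PiE {1..r} (\<lambda>l. {1..n l}).\<close>

definition space :: "nat \<Rightarrow> (nat \<Rightarrow> nat) \<Rightarrow> (nat \<Rightarrow> nat) set" where
  "space r n = PiE {1..r} (\<lambda>l. {1..n l})"

definition agree :: "nat \<Rightarrow> (nat \<Rightarrow> nat) \<Rightarrow> (nat \<Rightarrow> nat) \<Rightarrow> nat set" where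
  "agree r A B = {l \<in> {1..r}. A l = B l}"

definition t_intersecting :: "nat \<Rightarrow> nat \<Rightarrow> (nat \<Rightarrow> nat) set \<Rightarrow> bool" where
  "t_intersecting r t F \<longleftrightarrow> (\<forall>A\<in>F. \<forall>B\<in>F. card (agree r A B) \<ge> t)"

definition common :: "nat \<Rightarrow> (nat \<Rightarrow> nat) set \<Rightarrow> nat set" where
  "common r F = {l \<in> {1..r}. \<forall>A\<in>F. \<forall>B\<in>F. A l = B l}"

definition nontrivial_t_intersecting :: "nat \<Rightarrow> nat \<Rightarrow> (nat \<Rightarrow> nat) set \<Rightarrow> bool" where
  "nontrivial_t_intersecting r t F \<longleftrightarrow> t_intersecting r t F \<and> card (common r F) < t"

definition shift_elem :: "nat \<Rightarrow> nat \<Rightarrow> (nat \<Rightarrow> nat) set \<Rightarrow> (nat \<Rightarrow> nat) \<Rightarrow> (nat \<Rightarrow> nat)" where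
  "shift_elem l j F A = (if A l = j \<and> A(l := 1) \<notin> F then A(l := 1) else A)"

definition shift :: "nat \<Rightarrow> nat \<Rightarrow> (nat \<Rightarrow> nat) set \<Rightarrow> (nat \<Rightarrow> nat) set" where
  "shift l j F = shift_elem l j F ` F"

definition shift_resistant ::
  "nat \<Rightarrow> (nat \<Rightarrow> nat) \<Rightarrow> nat \<Rightarrow> nat \<Rightarrow> (nat \<Rightarrow> nat) set \<Rightarrow> bool" where
  "shift_resistant r n t l F \<longleftrightarrow> nontrivial_t_intersecting r t F \<and>
     (\<exists>x \<in> {1..n l} - {1}. card (common r (shift l x F)) = t)"

definition nbhd :: "(nat \<Rightarrow> nat) set \<Rightarrow> nat \<Rightarrow> nat \<Rightarrow> (nat \<Rightarrow> nat) set" where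
  "nbhd F x l = {A \<in> F. A l = x}"

end

theory Submission
  imports Defs
begin

text \<open>A shift at coordinate \<open>l\<close> changes no other coordinate, so if it raises the number of
  common coordinates from below \<open>t\<close> to \<open>t\<close>, the only new common coordinate is \<open>l\<close>, and it
  was not common before. A shift only ever moves an \<open>l\<close>-th entry to \<open>1\<close>; had the common
  value after shifting been different from \<open>1\<close>, nothing would have moved and \<open>F\<close> would
  already agree at \<open>l\<close>. Hence every member of \<open>F\<close> has \<open>l\<close>-th entry \<open>1\<close>, or entry \<open>x\<close> with its
  \<open>1\<close>-replacement missing from \<open>F\<close>; both kinds occur since \<open>F\<close> does not agree at \<open>l\<close>.\<close>

lemma shift_elem_apply_other: "l' \<noteq> l \<Longrightarrow> shift_elem l x F A l' = A l'"
  by (simp add: shift_elem_def)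

lemma shift_elem_apply_eq_1_iff:
  "shift_elem l x F A l = 1 \<longleftrightarrow> A l = 1 \<or> (A l = x \<and> A(l := 1) \<notin> F)"
  by (auto simp: shift_elem_def)

lemma shift_elem_apply_neq_1:
  "shift_elem l x F A l \<noteq> 1 \<Longrightarrow> shift_elem l x F A l = A l"
  by (auto simp: shift_elem_def)

lemma mem_common_shift_iff:
  "l' \<noteq> l \<Longrightarrow> l' \<in> common r (shift l x F) \<longleftrightarrow> l' \<in> common r F"
  by (auto simp: common_def shift_def shift_elem_apply_other)

lemma card_common_shift_gt:
  assumes "card (common r F) < card (common r (shift l x F))"
  shows "l \<in> common r (shift l x F)" "l \<notin> common r F"
    and "card (common r (shift l x F)) = Suc (card (common r F))"
proof -
  let ?S = "shift l x F"
  have fin: "finite (common r F)" "finite (common r ?S)"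
    by (auto simp: common_def)
  have diff: "common r ?S - {l} = common r F - {l}"
    by (rule set_eqI) (metis Diff_iff singletonD singletonI mem_common_shift_iff)
  show lS: "l \<in> common r ?S"
  proof (rule ccontr)
    assume "l \<notin> common r ?S"
    then have "common r ?S \<subseteq> common r F" using diff by blast
    then have "card (common r ?S) \<le> card (common r F)" by (rule card_mono[OF fin(1)])
    with assms show False by simp
  qed
  show lF: "l \<notin> common r F"
  proof
    assume "l \<in> common r F"
    then have "common r ?S = common r F" using diff lS by blast
    then show False using assms by simp
  qed
  have "common r ?S = insert l (common r F)" using diff lS lF by blast
  then show "card (common r ?S) = Suc (card (common r F))"
    using fin lF by simp
qed

lemma shift_elem_apply_eq_1_if_common:
  assumes shifted: "l \<in> common r (shift l x F)" and unshifted: "l \<notin> common r F"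
    and l: "l \<in> {1..r}" and A: "A \<in> F"
  shows "shift_elem l x F A l = 1"
proof (rule ccontr)
  assume ne: "shift_elem l x F A l \<noteq> 1"
  have "B l = shift_elem l x F A l" if "B \<in> F" for B
  proof -
    have "shift_elem l x F B l = shift_elem l x F A l"
      using shifted A that unfolding common_def shift_def by blast
    then show ?thesis using ne shift_elem_apply_neq_1 by metis
  qed
  then have "\<forall>B\<in>F. \<forall>C\<in>F. B l = C l" by metis
  then have "l \<in> common r F" using l by (simp add: common_def)
  with unshifted show False by contradiction
qed

theorem lemma2p2:
  fixes r t l :: nat and n :: "nat \<Rightarrow> nat" and F :: "(nat \<Rightarrow> nat) set"
  assumes "r \<ge> 3" and "1 \<le> t" and "t \<le> r - 2"
    and "\<forall>i \<in> {1..r}. n i \<ge> 2"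
    and "F \<subseteq> space r n"
    and "l \<in> {1..r}"
    and "shift_resistant r n t l F"
  shows "card (common r F) = t - 1 \<and>
    (\<exists>x \<in> {1..n l} - {1}.
       nbhd F x l \<noteq> {} \<and> nbhd F 1 l \<noteq> {} \<and>
       (\<forall>A \<in> nbhd F x l. A(l := 1) \<notin> F) \<and>
       (\<forall>y \<in> {1..n l} - {1, x}. nbhd F y l = {}))"
proof -
  from assms(7) obtain x where x: "x \<in> {1..n l} - {1}"
    and card_shift: "card (common r (shift l x F)) = t"
    and card_F: "card (common r F) < t"
    unfolding shift_resistant_def nontrivial_t_intersecting_def by blast
  note gt = card_common_shift_gt[of r F l x, unfolded card_shift, OF card_F]
  have entries: "A l = 1 \<or> (A l = x \<and> A(l := 1) \<notin> F)" if "A \<in> F" for A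
    using shift_elem_apply_eq_1_if_common[OF gt(1,2) assms(6) that]
      shift_elem_apply_eq_1_iff by blast
  from gt(2) assms(6) obtain A B where A: "A \<in> F" and B: "B \<in> F" and "A l \<noteq> B l"
    by (auto simp: common_def)
  then have "A l = 1 \<and> B l = x \<or> A l = x \<and> B l = 1"
    using entries by metis
  then have nonempty: "nbhd F x l \<noteq> {}" "nbhd F 1 l \<noteq> {}"
    using A B unfolding nbhd_def by blast+
  have no_replacement: "\<forall>A \<in> nbhd F x l. A(l := 1) \<notin> F"
  proof
    fix A assume "A \<in> nbhd F x l"
    then show "A(l := 1) \<notin> F" using entries[of A] x by (auto simp: nbhd_def)
  qed
  have "A l \<in> {1, x}" if "A \<in> F" for A
    using entries[OF that] by blast
  then have others_empty: "\<forall>y \<in> {1..n l} - {1, x}. nbhd F y l = {}"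
    by (auto simp: nbhd_def)
  have "card (common r F) = t - 1"
    using gt(3) by simp
  with x nonempty no_replacement others_empty show ?thesis
    by (intro conjI bexI[of _ x])
qed

end
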